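(* Let $0<\varepsilon\le1$ and let $g_0,\dots,g_n$ be non-zero matrices with entries in a local field such that $g_0\cdots g_n$ is well defined. Assume that for every $k\in\{1,\dots,n-1\}$, $\sigma(g_k)\le\varepsilon^2/12$, and that $g_k\,\mathbb{A}^\varepsilon\,g_{k+1}$ for all $k\in\{0,\dots,n-1\}$. Then for all $k\in\{1,\dots,n\}$, $g_0\cdots g_{k-1}\,\mathbb{A}^{\varepsilon/2}\,g_k\cdots g_n$.
   Context: Matrices are linear maps between spaces $\mathbb{K}^a$ normed by the Euclidean/Hermitian norm if $\mathbb{K}\in\{\mathbb{R},\mathbb{C}\}$ and the max-norm otherwise; $\|\cdot\|$ is the operator norm. $g\,\mathbb{A}^\varepsilon\,h$ means $\|gh\|\ge\varepsilon\|g\|\|h\|$. For $h\neq0$, $\sigma(h)=\|h\wedge h\|/\|h\|^2$ (ratio of second to first singular value). *)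

theory Defs
  imports "HOL-Analysis.Analysis"
begin

datatype nkind = Herm | MaxN

definition vnorm :: "nkind \<Rightarrow> ('a \<Rightarrow> real) \<Rightarrow> 'i set \<Rightarrow> ('i \<Rightarrow> 'a) \<Rightarrow> real" where
  "vnorm kind absv I x =
     (case kind of
        Herm \<Rightarrow> sqrt (\<Sum>i\<in>I. (absv (x i))\<^sup>2)
      | MaxN \<Rightarrow> Max (insert 0 ((\<lambda>i. absv (x i)) ` I)))"

definition opnorm :: "nkind \<Rightarrow> ('a::comm_ring_1 \<Rightarrow> real) \<Rightarrow> 'i set \<Rightarrow> 'j set \<Rightarrow> ('i \<Rightarrow> 'j \<Rightarrow> 'a) \<Rightarrow> real" where
  "opnorm kind absv I J A =
     Sup {vnorm kind absv I (\<lambda>i. \<Sum>j\<in>J. A i j * x j) | x. vnorm kind absv J x \<le> 1}"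

definition mnorm :: "nkind \<Rightarrow> ('a::comm_ring_1 \<Rightarrow> real) \<Rightarrow> nat \<Rightarrow> nat \<Rightarrow> (nat \<Rightarrow> nat \<Rightarrow> 'a) \<Rightarrow> real" where
  "mnorm kind absv r c A = opnorm kind absv {..<r} {..<c} A"

text \<open>Second exterior power: basis \<open>e_i \<and> e_j\<close>, \<open>i < j\<close>; matrix of \<open>A \<and> A\<close> = 2x2 minors.\<close>
definition pairs :: "nat \<Rightarrow> (nat \<times> nat) set" where
  "pairs n = {(i, j). i < j \<and> j < n}"

definition compound2 :: "(nat \<Rightarrow> nat \<Rightarrow> 'a::comm_ring_1) \<Rightarrow> (nat \<times> nat) \<Rightarrow> (nat \<times> nat) \<Rightarrow> 'a" where
  "compound2 A p q = A (fst p) (fst q) * A (snd p) (snd q) - A (fst p) (snd q) * A (snd p) (fst q)"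

definition wnorm :: "nkind \<Rightarrow> ('a::comm_ring_1 \<Rightarrow> real) \<Rightarrow> nat \<Rightarrow> nat \<Rightarrow> (nat \<Rightarrow> nat \<Rightarrow> 'a) \<Rightarrow> real" where
  "wnorm kind absv r c A = opnorm kind absv (pairs r) (pairs c) (compound2 A)"

definition sigma :: "nkind \<Rightarrow> ('a::comm_ring_1 \<Rightarrow> real) \<Rightarrow> nat \<Rightarrow> nat \<Rightarrow> (nat \<Rightarrow> nat \<Rightarrow> 'a) \<Rightarrow> real" where
  "sigma kind absv r c A = wnorm kind absv r c A / (mnorm kind absv r c A)\<^sup>2"

definition mmult :: "nat \<Rightarrow> (nat \<Rightarrow> nat \<Rightarrow> 'a::comm_ring_1) \<Rightarrow> (nat \<Rightarrow> nat \<Rightarrow> 'a) \<Rightarrow> nat \<Rightarrow> nat \<Rightarrow> 'a" where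
  "mmult m A B = (\<lambda>i j. \<Sum>k<m. A i k * B k j)"

definition nonzero_mat :: "nat \<Rightarrow> nat \<Rightarrow> (nat \<Rightarrow> nat \<Rightarrow> 'a::zero) \<Rightarrow> bool" where
  "nonzero_mat r c A \<longleftrightarrow> (\<exists>i<r. \<exists>j<c. A i j \<noteq> 0)"

definition aligned :: "nkind \<Rightarrow> ('a::comm_ring_1 \<Rightarrow> real) \<Rightarrow> real \<Rightarrow> nat \<Rightarrow> nat \<Rightarrow> nat \<Rightarrow>
    (nat \<Rightarrow> nat \<Rightarrow> 'a) \<Rightarrow> (nat \<Rightarrow> nat \<Rightarrow> 'a) \<Rightarrow> bool" where
  "aligned kind absv \<epsilon> r m c g h \<longleftrightarrow>
     mnorm kind absv r c (mmult m g h) \<ge> \<epsilon> * mnorm kind absv r m g * mnorm kind absv m c h"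

text \<open>Chain product \<open>g_a g_(a+1) \<cdots> g_(a+l)\<close>, where \<open>g k\<close> is a \<open>d k \<times> d (k+1)\<close> matrix.\<close>
fun cprod :: "(nat \<Rightarrow> nat \<Rightarrow> nat \<Rightarrow> 'a::comm_ring_1) \<Rightarrow> (nat \<Rightarrow> nat) \<Rightarrow> nat \<Rightarrow> nat \<Rightarrow> nat \<Rightarrow> nat \<Rightarrow> 'a" where
  "cprod g d a 0 = g a"
| "cprod g d a (Suc l) = mmult (d (a + Suc l)) (cprod g d a l) (g (a + Suc l))"

text \<open>Non-archimedean local field: a field with a nontrivial ultrametric absolute value,
  complete and locally compact (closed unit ball sequentially compact).\<close>
definition na_local_field :: "('b::field \<Rightarrow> real) \<Rightarrow> bool" where
  "na_local_field v \<longleftrightarrow>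
     (\<forall>x. v x \<ge> 0) \<and> (\<forall>x. v x = 0 \<longleftrightarrow> x = 0) \<and> (\<forall>x y. v (x * y) = v x * v y) \<and>
     (\<forall>x y. v (x + y) \<le> max (v x) (v y)) \<and> (\<exists>x. v x \<noteq> 0 \<and> v x \<noteq> 1) \<and>
     (\<forall>s. (\<forall>e::real>0. \<exists>N::nat. \<forall>m\<ge>N. \<forall>n\<ge>N. v (s m - s n) < e) \<longrightarrow>
          (\<exists>L. (\<lambda>n. v (s n - L)) \<longlonglongrightarrow> 0)) \<and>
     (\<forall>s. (\<forall>n. v (s n) \<le> 1) \<longrightarrow>
          (\<exists>(r::nat\<Rightarrow>nat) L. strict_mono r \<and> (\<lambda>n. v (s (r n) - L)) \<longlonglongrightarrow> 0))"

definition lemma2p15_claim :: "nkind \<Rightarrow> ('a::comm_ring_1 \<Rightarrow> real) \<Rightarrow> bool" where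
  "lemma2p15_claim kind absv \<longleftrightarrow>
    (\<forall>(\<epsilon>::real) (n::nat) (d::nat \<Rightarrow> nat) (g::nat \<Rightarrow> nat \<Rightarrow> nat \<Rightarrow> 'a).
       0 < \<epsilon> \<and> \<epsilon> \<le> 1 \<and>
       (\<forall>k\<le>n. nonzero_mat (d k) (d (Suc k)) (g k)) \<and>
       (\<forall>k. 1 \<le> k \<and> k \<le> n - 1 \<longrightarrow> sigma kind absv (d k) (d (Suc k)) (g k) \<le> \<epsilon>\<^sup>2 / 12) \<and>
       (\<forall>k<n. aligned kind absv \<epsilon> (d k) (d (Suc k)) (d (Suc (Suc k))) (g k) (g (Suc k)))
       \<longrightarrow>
       (\<forall>k. 1 \<le> k \<and> k \<le> n \<longrightarrow>
          aligned kind absv (\<epsilon> / 2) (d 0) (d k) (d (Suc n))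
            (cprod g d 0 (k - 1)) (cprod g d k (n - k))))"

end

(*
  The heart of the argument is the inequality
    ||g h|| ||h f|| <= ||g h f|| ||h|| + 2 ||g|| ||h /\ h|| ||f||
  for composable matrices g, h, f.  For vectors u = h y and v = h w, the array
  (g u)_i v_c - (g v)_i u_c is g applied to the columns of u /\ v, and u /\ v = (h /\ h)(y /\ w);
  hence |g u| |v| <= |g v| |u| + 2 ||g|| ||h /\ h|| |y| |w|, and taking suprema gives the inequality.
  If sigma(h) <= s, g A^a h and h A^b f, the error term is at most 2s/(ab) ||g h|| ||h f||, so
  ||h|| ||g h f|| >= (1 - 2s/(ab)) ||g h|| ||h f||.  With s = eps^2/12 and a, b in {eps, 3 eps/4},
  induction shows that g_0 ... g_(k-1) is (3 eps/4)-aligned with g_k and g_(k-1) with g_k ... g_n;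
  one more application with a = b = 3 eps/4 gives the constant 19 eps/36 >= eps/2.
*)

theory Submission
  imports Defs
begin

section \<open>Norms of families of nonnegative reals\<close>

definition lnorm :: "nkind \<Rightarrow> 'i set \<Rightarrow> ('i \<Rightarrow> real) \<Rightarrow> real" where
  "lnorm kind I f = (case kind of Herm \<Rightarrow> L2_set f I | MaxN \<Rightarrow> Max (insert 0 (f ` I)))"

lemma vnorm_eq_lnorm: "vnorm kind absv I x = lnorm kind I (\<lambda>i. absv (x i))"
  by (cases kind) (simp_all add: vnorm_def lnorm_def L2_set_def)

lemma Max_insert0_le_iff:
  "finite I \<Longrightarrow> Max (insert 0 (f ` I)) \<le> (t::real) \<longleftrightarrow> 0 \<le> t \<and> (\<forall>i\<in>I. f i \<le> t)"
  by (simp add: Max_le_iff)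

lemma Max_insert0_ge: "finite I \<Longrightarrow> i \<in> I \<Longrightarrow> f i \<le> Max (insert 0 (f ` I))"
  by (simp add: Max_ge_iff)

lemma Max_insert0_nonneg: "finite I \<Longrightarrow> (0::real) \<le> Max (insert 0 (f ` I))"
  by (simp add: Max_ge_iff)

lemma Max_insert0_cases:
  assumes "finite I"
  obtains "Max (insert 0 (f ` I)) = (0::real)" | i where "i \<in> I" "Max (insert 0 (f ` I)) = f i"
proof -
  have "Max (insert 0 (f ` I)) \<in> insert 0 (f ` I)" using assms by (intro Max_in) auto
  then show thesis using that by auto
qed

lemma lnorm_nonneg: "finite I \<Longrightarrow> 0 \<le> lnorm k I f"
  by (cases k) (simp_all add: lnorm_def Max_insert0_nonneg)

lemma member_le_lnorm: "finite I \<Longrightarrow> i \<in> I \<Longrightarrow> f i \<le> lnorm k I f"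
  by (cases k) (simp_all add: lnorm_def Max_insert0_ge member_le_L2_set)

lemma lnorm_le_sum:
  assumes "finite I" "\<And>i. i \<in> I \<Longrightarrow> 0 \<le> f i"
  shows "lnorm k I f \<le> sum f I"
  using assms
  by (cases k) (auto simp: lnorm_def L2_set_le_sum Max_insert0_le_iff sum_nonneg intro: member_le_sum)

lemma lnorm_mono:
  assumes "finite I" "\<And>i. i \<in> I \<Longrightarrow> 0 \<le> f i \<and> f i \<le> g i"
  shows "lnorm k I f \<le> lnorm k I g"
  using assms
  by (cases k) (force simp: lnorm_def L2_set_mono Max_insert0_le_iff Max_insert0_nonneg
      intro: order_trans[OF _ Max_insert0_ge])+

lemma lnorm_add_le:
  assumes "finite I" "\<And>i. i \<in> I \<Longrightarrow> 0 \<le> f i \<and> 0 \<le> g i"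
  shows "lnorm k I (\<lambda>i. f i + g i) \<le> lnorm k I f + lnorm k I g"
  using assms
  by (cases k) (simp_all add: lnorm_def L2_set_triangle_ineq Max_insert0_le_iff Max_insert0_nonneg
      add_mono Max_insert0_ge)

lemma lnorm_subset_le:
  assumes "finite J" "I \<subseteq> J" "\<And>i. i \<in> J \<Longrightarrow> 0 \<le> f i"
  shows "lnorm k I f \<le> lnorm k J f"
  using assms
  by (cases k) (auto simp: lnorm_def L2_set_def Max_insert0_le_iff Max_insert0_nonneg
      finite_subset Max_insert0_ge intro!: sum_mono2)

lemma lnorm_scale:
  assumes "finite I" "0 \<le> c" "\<And>i. i \<in> I \<Longrightarrow> 0 \<le> f i"
  shows "lnorm k I (\<lambda>i. c * f i) = c * lnorm k I f"
proof (cases k)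
  case Herm
  then show ?thesis using assms by (simp add: lnorm_def L2_set_right_distrib)
next
  case MaxN
  have "lnorm k I (\<lambda>i. c * f i) \<le> c * lnorm k I f"
    using assms MaxN by (simp add: lnorm_def Max_insert0_le_iff Max_insert0_nonneg Max_insert0_ge mult_left_mono)
  moreover have "c * lnorm k I f \<le> lnorm k I (\<lambda>i. c * f i)"
    using Max_insert0_cases[OF assms(1), of f]
    by cases (use MaxN assms Max_insert0_nonneg Max_insert0_ge[of I _ "\<lambda>i. c * f i"] in \<open>auto simp: lnorm_def\<close>)
  ultimately show ?thesis by simp
qed

lemma lnorm_Times:
  assumes A: "finite A" "\<And>i. i \<in> A \<Longrightarrow> 0 \<le> a i" and B: "finite B" "\<And>j. j \<in> B \<Longrightarrow> 0 \<le> b j"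
  shows "lnorm k (A \<times> B) (\<lambda>p. a (fst p) * b (snd p)) = lnorm k A a * lnorm k B b"
proof (cases k)
  case Herm
  have "(\<Sum>p\<in>A \<times> B. (a (fst p) * b (snd p))\<^sup>2) = (\<Sum>x\<in>A. (a x)\<^sup>2) * (\<Sum>y\<in>B. (b y)\<^sup>2)"
    by (simp add: sum_product sum.cartesian_product power_mult_distrib case_prod_beta')
  then show ?thesis using Herm by (simp add: lnorm_def L2_set_def real_sqrt_mult)
next
  case MaxN
  have fAB: "finite (A \<times> B)" using A B by simp
  have "lnorm k (A \<times> B) (\<lambda>p. a (fst p) * b (snd p)) \<le> lnorm k A a * lnorm k B b"
    using MaxN A B Max_insert0_nonneg[of A a] Max_insert0_nonneg[of B b]
      Max_insert0_ge[OF A(1), of _ a] Max_insert0_ge[OF B(1), of _ b]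
    by (auto simp: lnorm_def Max_insert0_le_iff[OF fAB] intro!: mult_mono)
  moreover have "lnorm k A a * lnorm k B b \<le> lnorm k (A \<times> B) (\<lambda>p. a (fst p) * b (snd p))"
  proof (cases rule: Max_insert0_cases[OF A(1), of a])
    case (2 i)
    show ?thesis
    proof (cases rule: Max_insert0_cases[OF B(1), of b])
      case (2 j)
      with \<open>i \<in> A\<close> \<open>Max (insert 0 (a ` A)) = a i\<close> show ?thesis
        using member_le_lnorm[OF fAB, of "(i, j)" "\<lambda>p. a (fst p) * b (snd p)" k] MaxN
        by (simp add: lnorm_def)
    qed (use MaxN Max_insert0_nonneg[OF fAB] in \<open>simp add: lnorm_def\<close>)
  qed (use MaxN Max_insert0_nonneg[OF fAB] in \<open>simp add: lnorm_def\<close>)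
  ultimately show ?thesis by simp
qed

lemma L2_set_Times: "L2_set F (A \<times> C) = L2_set (\<lambda>c. L2_set (\<lambda>a. F (a, c)) A) C"
proof -
  have "(\<Sum>p\<in>A \<times> C. (F p)\<^sup>2) = (\<Sum>a\<in>A. \<Sum>c\<in>C. (F (a, c))\<^sup>2)"
    by (simp add: sum.cartesian_product)
  also have "\<dots> = (\<Sum>c\<in>C. \<Sum>a\<in>A. (F (a, c))\<^sup>2)"
    by (rule sum.swap)
  finally show ?thesis by (simp add: L2_set_def sum_nonneg)
qed

lemma lnorm_Times_le_columnwise:
  assumes fin: "finite A" "finite B" "finite C" and K: "0 \<le> K"
    and nonneg: "\<And>p. p \<in> A \<times> C \<Longrightarrow> 0 \<le> F p" "\<And>p. p \<in> B \<times> C \<Longrightarrow> 0 \<le> G p"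
    and column: "\<And>c. c \<in> C \<Longrightarrow> lnorm k A (\<lambda>a. F (a, c)) \<le> K * lnorm k B (\<lambda>b. G (b, c))"
  shows "lnorm k (A \<times> C) F \<le> K * lnorm k (B \<times> C) G"
proof (cases k)
  case Herm
  have "L2_set (\<lambda>c. L2_set (\<lambda>a. F (a, c)) A) C \<le> L2_set (\<lambda>c. K * L2_set (\<lambda>b. G (b, c)) B) C"
    using column Herm by (intro L2_set_mono) (simp_all add: lnorm_def)
  then show ?thesis using Herm K by (simp add: lnorm_def L2_set_Times L2_set_right_distrib)
next
  case MaxN
  have "F (a, c) \<le> K * lnorm k (B \<times> C) G" if "a \<in> A" "c \<in> C" for a c
  proof -
    have "F (a, c) \<le> lnorm k A (\<lambda>a. F (a, c))" using fin that by (intro member_le_lnorm) simp_all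
    also have "\<dots> \<le> K * lnorm k B (\<lambda>b. G (b, c))" by (rule column[OF \<open>c \<in> C\<close>])
    also have "lnorm k B (\<lambda>b. G (b, c)) \<le> lnorm k (B \<times> C) G"
      using MaxN fin nonneg that
      by (auto simp: lnorm_def Max_insert0_le_iff Max_insert0_nonneg intro!: Max_insert0_ge)
    finally show ?thesis using K by (simp add: mult_left_mono)
  qed
  then show ?thesis
    using MaxN fin K lnorm_nonneg[of "B \<times> C" k G] by (auto simp: lnorm_def Max_insert0_le_iff)
qed

section \<open>Antisymmetric arrays and wedge products\<close>

lemma mem_pairs [simp]: "(i, j) \<in> pairs m \<longleftrightarrow> i < j \<and> j < m"
  by (simp add: pairs_def)

lemma finite_pairs [simp]: "finite (pairs m)"
  by (rule finite_subset[of _ "{..<m} \<times> {..<m}"]) auto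

lemma sum_square_eq_pairs:
  fixes G :: "nat \<times> nat \<Rightarrow> 'a::comm_monoid_add"
  shows "(\<Sum>p\<in>{..<m} \<times> {..<m}. G p) = (\<Sum>p\<in>pairs m. G p + G (snd p, fst p)) + (\<Sum>b<m. G (b, b))"
proof -
  have square: "{..<m} \<times> {..<m} = (pairs m \<union> prod.swap ` pairs m) \<union> (\<lambda>b. (b, b)) ` {..<m}"
    by (auto simp: image_iff) (metis linorder_neqE_nat mem_pairs swap_simp)
  have "(\<Sum>p\<in>{..<m} \<times> {..<m}. G p)
      = (\<Sum>p\<in>pairs m. G p) + (\<Sum>p\<in>prod.swap ` pairs m. G p) + (\<Sum>p\<in>(\<lambda>b. (b, b)) ` {..<m}. G p)"
    unfolding square by (subst sum.union_disjoint; auto)+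
  also have "(\<Sum>p\<in>prod.swap ` pairs m. G p) = (\<Sum>p\<in>pairs m. G (snd p, fst p))"
    by (subst sum.reindex) (auto simp: comp_def prod.swap_def)
  also have "(\<Sum>p\<in>(\<lambda>b. (b, b)) ` {..<m}. G p) = (\<Sum>b<m. G (b, b))"
    by (subst sum.reindex) (auto simp: inj_on_def)
  finally show ?thesis by (simp add: sum.distrib)
qed

definition square_factor :: "nkind \<Rightarrow> real" where
  "square_factor k = (case k of Herm \<Rightarrow> sqrt 2 | MaxN \<Rightarrow> 1)"

lemma lnorm_square_eq_pairs:
  assumes nonneg: "\<And>p. 0 \<le> f p" and sym: "\<And>a c. f (a, c) = f (c, a)" and diag: "\<And>a. f (a, a) = 0"
  shows "lnorm k ({..<m} \<times> {..<m}) f = square_factor k * lnorm k (pairs m) f"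
proof (cases k)
  case Herm
  have "(\<Sum>p\<in>{..<m} \<times> {..<m}. (f p)\<^sup>2) = 2 * (\<Sum>p\<in>pairs m. (f p)\<^sup>2)"
    using sym diag by (simp add: sum_square_eq_pairs sum_distrib_left case_prod_beta' flip: mult_2)
  then show ?thesis using Herm by (simp add: lnorm_def square_factor_def L2_set_def real_sqrt_mult)
next
  case MaxN
  have "f (a, c) \<le> lnorm k (pairs m) f" if "a < m" "c < m" for a c
  proof (cases a c rule: linorder_cases)
    case less
    then show ?thesis using that by (intro member_le_lnorm) auto
  next
    case equal
    then show ?thesis using diag lnorm_nonneg[of "pairs m" k f] by simp
  next
    case greater
    then show ?thesis using that sym[of a c] by (auto intro: member_le_lnorm)
  qed
  then have "lnorm k ({..<m} \<times> {..<m}) f \<le> lnorm k (pairs m) f"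
    using MaxN lnorm_nonneg[of "pairs m" k f] by (auto simp: lnorm_def Max_insert0_le_iff)
  moreover have "lnorm k (pairs m) f \<le> lnorm k ({..<m} \<times> {..<m}) f"
    using nonneg by (intro lnorm_subset_le) auto
  ultimately show ?thesis using MaxN by (simp add: square_factor_def)
qed

definition mat_vec :: "'j set \<Rightarrow> ('i \<Rightarrow> 'j \<Rightarrow> 'a::comm_ring_1) \<Rightarrow> ('j \<Rightarrow> 'a) \<Rightarrow> 'i \<Rightarrow> 'a" where
  "mat_vec J A x = (\<lambda>i. \<Sum>j\<in>J. A i j * x j)"

lemma mat_vec_mmult: "mat_vec J (mmult m A B) x = mat_vec {..<m} A (mat_vec J B x)"
  unfolding mat_vec_def mmult_def
  by (rule ext) (simp add: sum_distrib_left sum_distrib_right mult.assoc sum.swap[of _ J])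

lemma mat_vec_scale: "mat_vec J A (\<lambda>j. c * x j) = (\<lambda>i. c * mat_vec J A x i)"
  unfolding mat_vec_def by (rule ext) (simp add: sum_distrib_left mult.left_commute)

lemma mmult_assoc: "mmult m' (mmult m A B) C = mmult m A (mmult m' B C)"
  unfolding mmult_def
  by (intro ext) (simp add: sum_distrib_left sum_distrib_right mult.assoc sum.swap[of _ "{..<m'}"])

lemma cprod_Suc_left: "cprod g d a (Suc l) = mmult (d (Suc a)) (g a) (cprod g d (Suc a) l)"
proof (induction l)
  case (Suc l)
  then show ?case by (simp add: mmult_assoc)
qed simp

definition wedge :: "('i \<Rightarrow> 'a::comm_ring_1) \<Rightarrow> ('i \<Rightarrow> 'a) \<Rightarrow> 'i \<times> 'i \<Rightarrow> 'a" where
  "wedge y w p = y (fst p) * w (snd p) - y (snd p) * w (fst p)"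

lemma compound2_wedge:
  fixes h :: "nat \<Rightarrow> nat \<Rightarrow> 'a::comm_ring_1"
  shows "mat_vec (pairs m) (compound2 h) (wedge y w) = wedge (mat_vec {..<m} h y) (mat_vec {..<m} h w)"
proof
  fix p :: "nat \<times> nat"
  obtain a c where p: "p = (a, c)" by fastforce
  define G where "G q = (h a (fst q) * h c (snd q) - h a (snd q) * h c (fst q)) * (y (fst q) * w (snd q))" for q
  have "mat_vec (pairs m) (compound2 h) (wedge y w) p = (\<Sum>q\<in>pairs m. G q + G (snd q, fst q))"
    unfolding mat_vec_def p by (rule sum.cong) (auto simp: G_def compound2_def wedge_def algebra_simps)
  also have "\<dots> = (\<Sum>q\<in>{..<m} \<times> {..<m}. G q)"
    by (simp add: sum_square_eq_pairs G_def)
  also have "\<dots> = (\<Sum>b<m. \<Sum>d<m. G (b, d))"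
    by (simp add: sum.cartesian_product)
  also have "\<dots> = (\<Sum>b<m. \<Sum>d<m. (h a b * y b) * (h c d * w d)) - (\<Sum>b<m. \<Sum>d<m. (h c b * y b) * (h a d * w d))"
    by (simp add: G_def sum_subtractf algebra_simps)
  also have "\<dots> = wedge (mat_vec {..<m} h y) (mat_vec {..<m} h w) p"
    by (simp add: p wedge_def mat_vec_def sum_product)
  finally show "mat_vec (pairs m) (compound2 h) (wedge y w) p = wedge (mat_vec {..<m} h y) (mat_vec {..<m} h w) p" .
qed

section \<open>Absolute values and operator norms\<close>

text \<open>The last two assumptions allow every nonzero vector to be rescaled to norm one, which is
  what turns the supremum defining the operator norm into the bound \<open>|A x| \<le> \<parallel>A\<parallel> |x|\<close>.\<close>

locale abs_value =
  fixes kind :: nkind and absv :: "'a::comm_ring_1 \<Rightarrow> real"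
  assumes abs_nonneg: "0 \<le> absv x"
    and abs_eq_0_iff: "absv x = 0 \<longleftrightarrow> x = 0"
    and abs_mult: "absv (x * y) = absv x * absv y"
    and abs_triangle: "absv (x + y) \<le> absv x + absv y"
    and abs_surj_Herm: "kind = Herm \<Longrightarrow> 0 < r \<Longrightarrow> \<exists>c. absv c = r"
    and abs_invertible_MaxN: "kind = MaxN \<Longrightarrow> x \<noteq> 0 \<Longrightarrow> \<exists>c. absv c * absv x = 1"
begin

abbreviation vn :: "'i set \<Rightarrow> ('i \<Rightarrow> 'a) \<Rightarrow> real" where
  "vn \<equiv> vnorm kind absv"

abbreviation opn :: "'i set \<Rightarrow> 'j set \<Rightarrow> ('i \<Rightarrow> 'j \<Rightarrow> 'a) \<Rightarrow> real" where
  "opn \<equiv> opnorm kind absv"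

abbreviation mn :: "nat \<Rightarrow> nat \<Rightarrow> (nat \<Rightarrow> nat \<Rightarrow> 'a) \<Rightarrow> real" where
  "mn \<equiv> mnorm kind absv"

lemma abs_one: "absv 1 = 1"
  using abs_mult[of 1 1] abs_eq_0_iff[of 1] by simp

lemma abs_zero [simp]: "absv 0 = 0"
  using abs_eq_0_iff by simp

lemma abs_minus: "absv (- x) = absv x"
proof -
  have "(absv (-1) - 1) * (absv (-1) + 1) = 0"
    using abs_mult[of "-1" "-1"] abs_one by (simp add: algebra_simps)
  moreover have "absv (-1) + 1 \<noteq> 0" using abs_nonneg[of "-1"] by simp
  ultimately show ?thesis using abs_mult[of "-1" x] by simp
qed

lemma abs_diff_le: "absv (x - y) \<le> absv x + absv y"
  using abs_triangle[of x "-y"] abs_minus[of y] by simp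

lemma abs_sum_le: "absv (sum f S) \<le> (\<Sum>i\<in>S. absv (f i))"
proof (induction S rule: infinite_finite_induct)
  case (insert a A)
  then show ?case using abs_triangle[of "f a" "sum f A"] by simp
qed simp_all

lemma vnorm_nonneg: "finite I \<Longrightarrow> 0 \<le> vn I x"
  by (simp add: vnorm_eq_lnorm lnorm_nonneg)

lemma abs_le_vnorm: "finite I \<Longrightarrow> i \<in> I \<Longrightarrow> absv (x i) \<le> vn I x"
  unfolding vnorm_eq_lnorm by (rule member_le_lnorm)

lemma vnorm_le_sum: "finite I \<Longrightarrow> vn I x \<le> (\<Sum>i\<in>I. absv (x i))"
  by (simp add: vnorm_eq_lnorm lnorm_le_sum abs_nonneg)

lemma vnorm_scale: "finite I \<Longrightarrow> vn I (\<lambda>i. c * x i) = absv c * vn I x"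
  by (simp add: vnorm_eq_lnorm abs_mult lnorm_scale abs_nonneg)

lemma vnorm_zero: "finite I \<Longrightarrow> vn I (\<lambda>i. 0) = 0"
  using vnorm_le_sum[of I "\<lambda>i. 0"] vnorm_nonneg[of I "\<lambda>i. 0"] by simp

lemma vnorm_normalize:
  assumes "finite I" "0 < vn I x"
  obtains c where "absv c * vn I x = 1"
proof (cases kind)
  case Herm
  then obtain c where "absv c = 1 / vn I x" using abs_surj_Herm assms(2) by force
  then have "absv c * vn I x = 1" using assms(2) by simp
  then show thesis by (rule that)
next
  case MaxN
  then have max: "vn I x = Max (insert 0 ((\<lambda>i. absv (x i)) ` I))"
    by (simp add: vnorm_eq_lnorm lnorm_def)
  show thesis
  proof (cases rule: Max_insert0_cases[OF assms(1), of "\<lambda>i. absv (x i)"])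
    case (2 i)
    then have "vn I x = absv (x i)" "x i \<noteq> 0" using max assms(2) by auto
    then show thesis using abs_invertible_MaxN[OF MaxN] that by metis
  qed (use max assms in simp)
qed

lemma abs_mat_vec_le: "absv (mat_vec J A x i) \<le> (\<Sum>j\<in>J. absv (A i j) * absv (x j))"
  unfolding mat_vec_def using abs_sum_le[of "\<lambda>j. A i j * x j" J] by (simp add: abs_mult)

lemma bdd_above_opnorm_set:
  assumes "finite I" "finite J"
  shows "bdd_above {vn I (mat_vec J A x) | x. vn J x \<le> 1}"
proof (rule bdd_aboveI)
  fix r assume "r \<in> {vn I (mat_vec J A x) | x. vn J x \<le> 1}"
  then obtain x where r: "r = vn I (mat_vec J A x)" and x: "vn J x \<le> 1" by auto
  have entry: "absv (A i j) * absv (x j) \<le> absv (A i j)" if "j \<in> J" for i j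
    using abs_le_vnorm[OF assms(2) that, of x] x abs_nonneg[of "A i j"] by (simp add: mult_left_le)
  have row: "absv (mat_vec J A x i) \<le> (\<Sum>j\<in>J. absv (A i j))" for i
    using abs_mat_vec_le[of J A x i] sum_mono[of J, OF entry] by (rule order_trans)
  have "r \<le> (\<Sum>i\<in>I. absv (mat_vec J A x i))" using r vnorm_le_sum[OF assms(1)] by simp
  also have "\<dots> \<le> (\<Sum>i\<in>I. \<Sum>j\<in>J. absv (A i j))" by (rule sum_mono[OF row])
  finally show "r \<le> (\<Sum>i\<in>I. \<Sum>j\<in>J. absv (A i j))" .
qed

lemma vnorm_mat_vec_le_opnorm:
  "finite I \<Longrightarrow> finite J \<Longrightarrow> vn J x \<le> 1 \<Longrightarrow> vn I (mat_vec J A x) \<le> opn I J A"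
  unfolding opnorm_def mat_vec_def[symmetric] by (rule cSup_upper) (auto intro: bdd_above_opnorm_set)

lemma opnorm_nonneg: "finite I \<Longrightarrow> finite J \<Longrightarrow> 0 \<le> opn I J A"
  using vnorm_mat_vec_le_opnorm[of I J "\<lambda>j. 0" A] by (simp add: vnorm_zero mat_vec_def)

lemma opnorm_le:
  assumes "finite J" "\<And>x. vn J x \<le> 1 \<Longrightarrow> vn I (mat_vec J A x) \<le> K"
  shows "opn I J A \<le> K"
  unfolding opnorm_def mat_vec_def[symmetric]
proof (rule cSup_least)
  have "vn J (\<lambda>j. 0) \<le> 1" using vnorm_zero[OF assms(1)] by simp
  then show "{vn I (mat_vec J A x) |x. vn J x \<le> 1} \<noteq> {}" by blast
qed (use assms(2) in auto)

lemma vnorm_mat_vec_le: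
  assumes I: "finite I" and J: "finite J"
  shows "vn I (mat_vec J A x) \<le> opn I J A * vn J x"
proof (cases "vn J x = 0")
  case True
  then have "x j = 0" if "j \<in> J" for j
    using abs_le_vnorm[OF J that, of x] abs_nonneg[of "x j"] abs_eq_0_iff by simp
  then have "mat_vec J A x = (\<lambda>i. 0)" by (simp add: mat_vec_def)
  then show ?thesis using True vnorm_zero[OF I] by simp
next
  case False
  then have pos: "0 < vn J x" using vnorm_nonneg[OF J, of x] by simp
  then obtain c where c: "absv c * vn J x = 1" by (rule vnorm_normalize[OF J])
  have "vn J (\<lambda>j. c * x j) \<le> 1" using c vnorm_scale[OF J] by simp
  from vnorm_mat_vec_le_opnorm[OF I J this, of A]
  have "absv c * vn I (mat_vec J A x) \<le> opn I J A" by (simp add: mat_vec_scale vnorm_scale[OF I])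
  then have "(absv c * vn J x) * vn I (mat_vec J A x) \<le> opn I J A * vn J x"
    using pos by (simp add: mult_right_mono mult.commute mult.left_commute)
  then show ?thesis using c by simp
qed

lemma abs_entry_le_opnorm:
  assumes I: "finite I" "i \<in> I" and J: "finite J" "j \<in> J"
  shows "absv (A i j) \<le> opn I J A"
proof -
  let ?e = "\<lambda>k. if k = j then 1 else 0"
  have "vn J ?e \<le> 1"
    using vnorm_le_sum[OF J(1), of ?e] J by (simp add: abs_one if_distrib cong: if_cong)
  then have "vn I (mat_vec J A ?e) \<le> opn I J A" by (rule vnorm_mat_vec_le_opnorm[OF I(1) J(1)])
  moreover have "mat_vec J A ?e i = A i j"
    using J by (simp add: mat_vec_def if_distrib cong: if_cong)
  ultimately show ?thesis using abs_le_vnorm[OF I, of "mat_vec J A ?e"] by simp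
qed

lemma mnorm_nonneg: "0 \<le> mn r c A"
  unfolding mnorm_def by (rule opnorm_nonneg) simp_all

lemma nonzero_mat_mnorm_pos:
  assumes "nonzero_mat r c A"
  shows "0 < mn r c A"
proof -
  obtain i j where "i < r" "j < c" "A i j \<noteq> 0" using assms by (auto simp: nonzero_mat_def)
  then have "0 < absv (A i j)" using abs_eq_0_iff abs_nonneg[of "A i j"] by (simp add: less_le)
  also have "absv (A i j) \<le> mn r c A"
    unfolding mnorm_def using \<open>i < r\<close> \<open>j < c\<close> by (intro abs_entry_le_opnorm) simp_all
  finally show ?thesis .
qed

lemma opnorm_mult_le:
  assumes J: "finite J" and t: "0 \<le> t" and K: "0 \<le> K"
    and bound: "\<And>x. vn J x \<le> 1 \<Longrightarrow> vn I (mat_vec J A x) * t \<le> K"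
  shows "opn I J A * t \<le> K"
proof (cases "t = 0")
  case False
  then have "0 < t" using t by simp
  have "opn I J A \<le> K / t"
    using bound \<open>0 < t\<close> by (intro opnorm_le[OF J]) (simp add: pos_le_divide_eq)
  then show ?thesis using \<open>0 < t\<close> by (simp add: pos_le_divide_eq)
qed (simp add: K)

section \<open>The overlap inequality\<close>

lemma lnorm_wedge_le:
  assumes I: "finite I"
  shows "lnorm kind (I \<times> I) (\<lambda>p. absv (wedge y w p)) \<le> 2 * vn I y * vn I w"
proof -
  let ?yw = "\<lambda>p. absv (y (fst p)) * absv (w (snd p))" and ?wy = "\<lambda>p. absv (w (fst p)) * absv (y (snd p))"
  have "absv (wedge y w p) \<le> ?yw p + ?wy p" for p
    using abs_diff_le[of "y (fst p) * w (snd p)" "y (snd p) * w (fst p)"]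
    by (simp add: wedge_def abs_mult mult.commute)
  then have "lnorm kind (I \<times> I) (\<lambda>p. absv (wedge y w p)) \<le> lnorm kind (I \<times> I) (\<lambda>p. ?yw p + ?wy p)"
    using I abs_nonneg by (intro lnorm_mono) simp_all
  also have "\<dots> \<le> lnorm kind (I \<times> I) ?yw + lnorm kind (I \<times> I) ?wy"
    using I by (intro lnorm_add_le) (simp_all add: abs_nonneg)
  also have "\<dots> = 2 * vn I y * vn I w"
    using I lnorm_Times[of I "\<lambda>i. absv (y i)" I "\<lambda>i. absv (w i)" kind]
      lnorm_Times[of I "\<lambda>i. absv (w i)" I "\<lambda>i. absv (y i)" kind]
    by (simp add: abs_nonneg vnorm_eq_lnorm)
  finally show ?thesis .
qed

lemma lnorm_square_wedge:
  "lnorm kind ({..<m} \<times> {..<m}) (\<lambda>p. absv (wedge y w p)) = square_factor kind * vn (pairs m) (wedge y w)"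
  unfolding vnorm_eq_lnorm
proof (rule lnorm_square_eq_pairs)
  show "absv (wedge y w (a, c)) = absv (wedge y w (c, a))" for a c
    using abs_minus[of "wedge y w (c, a)"] by (simp add: wedge_def)
qed (simp_all add: abs_nonneg wedge_def)

lemma lnorm_wedge_mat_vec_le:
  "lnorm kind ({..<m} \<times> {..<m}) (\<lambda>p. absv (wedge (mat_vec {..<m'} h y) (mat_vec {..<m'} h w) p))
     \<le> 2 * opn (pairs m) (pairs m') (compound2 h) * vn {..<m'} y * vn {..<m'} w"
proof -
  have "0 \<le> square_factor kind" by (cases kind) (simp_all add: square_factor_def)
  have "lnorm kind ({..<m} \<times> {..<m}) (\<lambda>p. absv (wedge (mat_vec {..<m'} h y) (mat_vec {..<m'} h w) p))
      = square_factor kind * vn (pairs m) (mat_vec (pairs m') (compound2 h) (wedge y w))"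
    by (simp add: lnorm_square_wedge compound2_wedge)
  also have "\<dots> \<le> square_factor kind * (opn (pairs m) (pairs m') (compound2 h) * vn (pairs m') (wedge y w))"
    using \<open>0 \<le> square_factor kind\<close> by (intro mult_left_mono vnorm_mat_vec_le) simp_all
  also have "\<dots> = opn (pairs m) (pairs m') (compound2 h) * lnorm kind ({..<m'} \<times> {..<m'}) (\<lambda>p. absv (wedge y w p))"
    by (simp add: lnorm_square_wedge)
  also have "\<dots> \<le> opn (pairs m) (pairs m') (compound2 h) * (2 * vn {..<m'} y * vn {..<m'} w)"
    by (intro mult_left_mono lnorm_wedge_le opnorm_nonneg) simp_all
  finally show ?thesis by (simp add: mult_ac)
qed

lemma vnorm_mat_vec_exchange:
  assumes P: "finite P" and M: "finite M"
  shows "vn P (mat_vec M g u) * vn M v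
    \<le> vn P (mat_vec M g v) * vn M u + opn P M g * lnorm kind (M \<times> M) (\<lambda>p. absv (wedge u v p))"
proof -
  define T where "T q = mat_vec M g (\<lambda>a. wedge u v (a, snd q)) (fst q)" for q
  have T_eq: "mat_vec M g u i * v c = T (i, c) + mat_vec M g v i * u c" for i c
    by (simp add: T_def mat_vec_def wedge_def sum_distrib_left sum_distrib_right sum_subtractf algebra_simps)
  have T_le: "lnorm kind (P \<times> M) (\<lambda>q. absv (T q)) \<le> opn P M g * lnorm kind (M \<times> M) (\<lambda>p. absv (wedge u v p))"
  proof (rule lnorm_Times_le_columnwise[OF P M M])
    fix c
    have "lnorm kind P (\<lambda>i. absv (T (i, c))) = vn P (mat_vec M g (\<lambda>a. wedge u v (a, c)))"
      by (simp add: T_def vnorm_eq_lnorm)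
    also have "\<dots> \<le> opn P M g * vn M (\<lambda>a. wedge u v (a, c))" by (rule vnorm_mat_vec_le[OF P M])
    finally show "lnorm kind P (\<lambda>i. absv (T (i, c))) \<le> opn P M g * lnorm kind M (\<lambda>a. absv (wedge u v (a, c)))"
      by (simp add: vnorm_eq_lnorm)
  qed (simp_all add: opnorm_nonneg P M abs_nonneg)
  let ?gv_u = "\<lambda>q. absv (mat_vec M g v (fst q)) * absv (u (snd q))"
  have "vn P (mat_vec M g u) * vn M v = lnorm kind (P \<times> M) (\<lambda>q. absv (mat_vec M g u (fst q)) * absv (v (snd q)))"
    unfolding vnorm_eq_lnorm using P M
    by (simp add: lnorm_Times[of P "\<lambda>i. absv (mat_vec M g u i)" M "\<lambda>c. absv (v c)"] abs_nonneg)
  also have "\<dots> \<le> lnorm kind (P \<times> M) (\<lambda>q. absv (T q) + ?gv_u q)"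
    using P M T_eq abs_triangle by (intro lnorm_mono) (auto simp: abs_nonneg simp flip: abs_mult)
  also have "\<dots> \<le> lnorm kind (P \<times> M) (\<lambda>q. absv (T q)) + lnorm kind (P \<times> M) ?gv_u"
    using P M by (intro lnorm_add_le) (simp_all add: abs_nonneg)
  also have "lnorm kind (P \<times> M) ?gv_u = vn P (mat_vec M g v) * vn M u"
    unfolding vnorm_eq_lnorm using P M
    by (simp add: lnorm_Times[of P "\<lambda>i. absv (mat_vec M g v i)" M "\<lambda>c. absv (u c)"] abs_nonneg)
  finally show ?thesis using T_le by simp
qed

lemma vnorm_mat_vec_overlap:
  "vn {..<p} (mat_vec {..<m} g (mat_vec {..<m'} h y)) * vn {..<m} (mat_vec {..<m'} h w)
    \<le> vn {..<p} (mat_vec {..<m} g (mat_vec {..<m'} h w)) * vn {..<m} (mat_vec {..<m'} h y)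
      + 2 * mn p m g * wnorm kind absv m m' h * vn {..<m'} y * vn {..<m'} w"
proof -
  have "mn p m g * lnorm kind ({..<m} \<times> {..<m}) (\<lambda>p. absv (wedge (mat_vec {..<m'} h y) (mat_vec {..<m'} h w) p))
      \<le> mn p m g * (2 * wnorm kind absv m m' h * vn {..<m'} y * vn {..<m'} w)"
    unfolding wnorm_def by (intro mult_left_mono lnorm_wedge_mat_vec_le mnorm_nonneg)
  with vnorm_mat_vec_exchange[of "{..<p}" "{..<m}" g "mat_vec {..<m'} h y" "mat_vec {..<m'} h w"]
  show ?thesis unfolding mnorm_def by (simp add: mult_ac)
qed

lemma mnorm_mmult_overlap:
  fixes g h f :: "nat \<Rightarrow> nat \<Rightarrow> 'a"
  shows "mn p m' (mmult m g h) * mn m q (mmult m' h f)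
    \<le> mn p q (mmult m' (mmult m g h) f) * mn m m' h + 2 * mn p m g * wnorm kind absv m m' h * mn m' q f"
    (is "_ \<le> ?K")
proof -
  have K: "0 \<le> ?K" by (simp add: mnorm_nonneg wnorm_def opnorm_nonneg)
  have "vn {..<p} (mat_vec {..<m'} (mmult m g h) y) * vn {..<m} (mat_vec {..<q} (mmult m' h f) x) \<le> ?K"
    if x: "vn {..<q} x \<le> 1" and y: "vn {..<m'} y \<le> 1" for x y
  proof -
    define w where "w = mat_vec {..<q} f x"
    have ghw: "vn {..<p} (mat_vec {..<m} g (mat_vec {..<m'} h w)) \<le> mn p q (mmult m' (mmult m g h) f)"
      unfolding w_def mnorm_def using x by (simp add: vnorm_mat_vec_le_opnorm mmult_assoc flip: mat_vec_mmult)
    have hy: "vn {..<m} (mat_vec {..<m'} h y) \<le> mn m m' h"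
      unfolding mnorm_def using y by (intro vnorm_mat_vec_le_opnorm) simp_all
    have w: "vn {..<m'} w \<le> mn m' q f"
      unfolding w_def mnorm_def using x by (intro vnorm_mat_vec_le_opnorm) simp_all
    have "vn {..<p} (mat_vec {..<m} g (mat_vec {..<m'} h w)) * vn {..<m} (mat_vec {..<m'} h y)
        \<le> mn p q (mmult m' (mmult m g h) f) * mn m m' h"
      using ghw hy by (intro mult_mono) (simp_all add: mnorm_nonneg vnorm_nonneg)
    moreover have "2 * mn p m g * wnorm kind absv m m' h * (vn {..<m'} y * vn {..<m'} w)
        \<le> 2 * mn p m g * wnorm kind absv m m' h * (1 * mn m' q f)"
      using w y by (intro mult_left_mono mult_mono) (simp_all add: vnorm_nonneg mnorm_nonneg wnorm_def opnorm_nonneg)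
    ultimately show ?thesis
      using vnorm_mat_vec_overlap[of p m g m' h y w] by (simp add: mat_vec_mmult w_def mult_ac)
  qed
  then have "mn p m' (mmult m g h) * vn {..<m} (mat_vec {..<q} (mmult m' h f) x) \<le> ?K"
    if "vn {..<q} x \<le> 1" for x
    unfolding mnorm_def[of kind absv p m' "mmult m g h"] using that K
    by (intro opnorm_mult_le) (simp_all add: vnorm_nonneg)
  then have "mn m q (mmult m' h f) * mn p m' (mmult m g h) \<le> ?K"
    unfolding mnorm_def[of kind absv m q "mmult m' h f"] using K
    by (intro opnorm_mult_le) (simp_all add: mnorm_nonneg mult.commute)
  then show ?thesis by (simp add: mult.commute)
qed

lemma mnorm_mmult3_lower:
  assumes h: "0 < mn m m' h" and sigma: "sigma kind absv m m' h \<le> s"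
    and a: "0 < a" "aligned kind absv a r m m' L h"
    and b: "0 < b" "aligned kind absv b m m' q h R"
  shows "(1 - 2 * s / (a * b)) * mn r m' (mmult m L h) * mn m q (mmult m' h R)
    \<le> mn m m' h * mn r q (mmult m' (mmult m L h) R)"
proof -
  define X Y S F N W Z where "X = mn r m' (mmult m L h)" and "Y = mn r m L" and "S = mn m q (mmult m' h R)"
    and "F = mn m' q R" and "N = mn m m' h" and "W = wnorm kind absv m m' h"
    and "Z = mn r q (mmult m' (mmult m L h) R)"
  have nonneg: "0 \<le> X" "0 \<le> Y" "0 \<le> S" "0 \<le> F" "0 \<le> W"
    by (simp_all add: X_def Y_def S_def F_def W_def mnorm_nonneg wnorm_def opnorm_nonneg)
  have "0 < N" using h by (simp add: N_def)
  have XY: "a * Y * N \<le> X" and SF: "b * N * F \<le> S"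
    using a b by (simp_all add: aligned_def X_def Y_def S_def F_def N_def)
  have W: "W \<le> s * N\<^sup>2"
    using sigma \<open>0 < N\<close> by (simp add: sigma_def W_def N_def pos_divide_le_eq)
  have "0 \<le> s"
    using sigma order_trans[OF divide_nonneg_nonneg[OF nonneg(5) zero_le_power2[of N]]]
    by (simp add: sigma_def W_def N_def)
  have "2 * Y * W * F \<le> 2 * s * (Y * N) * (N * F)"
    using mult_left_mono[OF W, of "2 * Y * F"] nonneg by (simp add: power2_eq_square mult_ac)
  also have "\<dots> \<le> 2 * s * (X / a) * (S / b)"
    using XY SF a(1) b(1) nonneg \<open>0 < N\<close> \<open>0 \<le> s\<close>
    by (intro mult_mono mult_left_mono) (simp_all add: pos_le_divide_eq mult_ac)
  finally have "2 * Y * W * F \<le> 2 * s / (a * b) * X * S" by simp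
  moreover have "X * S \<le> Z * N + 2 * Y * W * F"
    using mnorm_mmult_overlap[of r m' m L h q R] by (simp add: X_def Y_def S_def F_def N_def W_def Z_def)
  ultimately have "X * S - 2 * s / (a * b) * X * S \<le> N * Z" by (simp add: mult.commute)
  then show ?thesis by (simp add: X_def S_def N_def Z_def left_diff_distrib)
qed

section \<open>Alignment along a product\<close>

lemma aligned_mono:
  assumes "aligned kind absv \<epsilon> r m c g h" "\<epsilon>' \<le> \<epsilon>"
  shows "aligned kind absv \<epsilon>' r m c g h"
proof -
  have "\<epsilon>' * (mn r m g * mn m c h) \<le> \<epsilon> * (mn r m g * mn m c h)"
    using assms(2) by (intro mult_right_mono) (simp_all add: mnorm_nonneg)
  then show ?thesis using assms(1) by (simp add: aligned_def mult.assoc)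
qed

lemma aligned_mmult_right:
  assumes h: "0 < mn m m' h" "sigma kind absv m m' h \<le> s"
    and a: "0 < a" "aligned kind absv a r m m' L h"
    and b: "0 < b" "aligned kind absv b m m' q h R"
    and c: "0 \<le> c" "c \<le> (1 - 2 * s / (a * b)) * b"
  shows "aligned kind absv c r m' q (mmult m L h) R"
proof -
  define k where "k = 1 - 2 * s / (a * b)"
  have "0 \<le> k * b" using c unfolding k_def by linarith
  then have "0 \<le> k" using b(1) by (simp add: zero_le_mult_iff)
  let ?X = "mn r m' (mmult m L h)" and ?F = "mn m' q R"
  have "mn m m' h * (k * b * ?X * ?F) = k * ?X * (b * mn m m' h * ?F)" by (simp add: mult_ac)
  also have "\<dots> \<le> k * ?X * mn m q (mmult m' h R)"
    using b(2) \<open>0 \<le> k\<close> by (intro mult_left_mono) (simp_all add: aligned_def mnorm_nonneg)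
  also have "\<dots> \<le> mn m m' h * mn r q (mmult m' (mmult m L h) R)"
    using mnorm_mmult3_lower[OF h a b] by (simp add: k_def)
  finally have "k * b * ?X * ?F \<le> mn r q (mmult m' (mmult m L h) R)" using h(1) by simp
  moreover have "c * ?X * ?F \<le> k * b * ?X * ?F"
    using c by (intro mult_right_mono) (simp_all add: k_def mnorm_nonneg)
  ultimately show ?thesis unfolding aligned_def by linarith
qed

lemma aligned_mmult_left:
  assumes h: "0 < mn m m' h" "sigma kind absv m m' h \<le> s"
    and a: "0 < a" "aligned kind absv a r m m' L h"
    and b: "0 < b" "aligned kind absv b m m' q h R"
    and c: "0 \<le> c" "c \<le> (1 - 2 * s / (a * b)) * a"
  shows "aligned kind absv c r m q L (mmult m' h R)"
proof -
  define k where "k = 1 - 2 * s / (a * b)"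
  have "0 \<le> k * a" using c unfolding k_def by linarith
  then have "0 \<le> k" using a(1) by (simp add: zero_le_mult_iff)
  let ?Y = "mn r m L" and ?S = "mn m q (mmult m' h R)"
  have "mn m m' h * (k * a * ?Y * ?S) = k * (a * ?Y * mn m m' h) * ?S" by (simp add: mult_ac)
  also have "\<dots> \<le> k * mn r m' (mmult m L h) * ?S"
    using a(2) \<open>0 \<le> k\<close> by (intro mult_right_mono mult_left_mono) (simp_all add: aligned_def mnorm_nonneg)
  also have "\<dots> \<le> mn m m' h * mn r q (mmult m L (mmult m' h R))"
    using mnorm_mmult3_lower[OF h a b] by (simp add: k_def mmult_assoc)
  finally have "k * a * ?Y * ?S \<le> mn r q (mmult m L (mmult m' h R))" using h(1) by simp
  moreover have "c * ?Y * ?S \<le> k * a * ?Y * ?S"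
    using c by (intro mult_right_mono) (simp_all add: k_def mnorm_nonneg)
  ultimately show ?thesis unfolding aligned_def by linarith
qed

context
  fixes \<epsilon> :: real and n :: nat and d :: "nat \<Rightarrow> nat" and g :: "nat \<Rightarrow> nat \<Rightarrow> nat \<Rightarrow> 'a"
  assumes pos: "0 < \<epsilon>"
    and nonzero: "\<And>k. k \<le> n \<Longrightarrow> 0 < mn (d k) (d (Suc k)) (g k)"
    and sigma: "\<And>k. 1 \<le> k \<Longrightarrow> k < n \<Longrightarrow> sigma kind absv (d k) (d (Suc k)) (g k) \<le> \<epsilon>\<^sup>2 / 12"
    and aligned: "\<And>k. k < n \<Longrightarrow> aligned kind absv \<epsilon> (d k) (d (Suc k)) (d (Suc (Suc k))) (g k) (g (Suc k))"
begin

lemma cprod_prefix_aligned: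
  "j < n \<Longrightarrow> aligned kind absv (3 * \<epsilon> / 4) (d 0) (d (Suc j)) (d (Suc (Suc j))) (cprod g d 0 j) (g (Suc j))"
proof (induction j)
  case 0
  have "aligned kind absv (3 * \<epsilon> / 4) (d 0) (d (Suc 0)) (d (Suc (Suc 0))) (g 0) (g (Suc 0))"
    using aligned[OF 0] by (rule aligned_mono) (use pos in simp)
  then show ?case by simp
next
  case (Suc j)
  have num: "3 * \<epsilon> / 4 \<le> (1 - 2 * (\<epsilon>\<^sup>2 / 12) / (3 * \<epsilon> / 4 * \<epsilon>)) * \<epsilon>"
    using pos by (simp add: field_simps power2_eq_square)
  have "aligned kind absv (3 * \<epsilon> / 4) (d 0) (d (Suc (Suc j))) (d (Suc (Suc (Suc j))))
      (mmult (d (Suc j)) (cprod g d 0 j) (g (Suc j))) (g (Suc (Suc j)))"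
    using Suc pos by (intro aligned_mmult_right[OF nonzero sigma _ _ _ aligned _ num]) simp_all
  then show ?case by simp
qed

lemma cprod_suffix_aligned:
  assumes "i < n"
  shows "aligned kind absv (3 * \<epsilon> / 4) (d i) (d (Suc i)) (d (Suc n)) (g i) (cprod g d (Suc i) (n - Suc i))"
proof -
  have "i \<le> n - 1" using assms by simp
  then show ?thesis
  proof (induction i rule: inc_induct)
    case base
    have "aligned kind absv \<epsilon> (d (n - 1)) (d n) (d (Suc n)) (g (n - 1)) (g n)"
      using aligned[of "n - 1"] assms by simp
    then have "aligned kind absv (3 * \<epsilon> / 4) (d (n - 1)) (d n) (d (Suc n)) (g (n - 1)) (g n)"
      by (rule aligned_mono) (use pos in simp)
    then show ?case using assms by simp
  next
    case (step i)
    have num: "3 * \<epsilon> / 4 \<le> (1 - 2 * (\<epsilon>\<^sup>2 / 12) / (\<epsilon> * (3 * \<epsilon> / 4))) * \<epsilon>"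
      using pos by (simp add: field_simps power2_eq_square)
    have "aligned kind absv (3 * \<epsilon> / 4) (d i) (d (Suc i)) (d (Suc n))
        (g i) (mmult (d (Suc (Suc i))) (g (Suc i)) (cprod g d (Suc (Suc i)) (n - Suc (Suc i))))"
      using step pos by (intro aligned_mmult_left[OF nonzero sigma _ aligned _ _ _ num]) simp_all
    moreover have "n - Suc i = Suc (n - Suc (Suc i))" using step.hyps by simp
    ultimately show ?case by (simp only: cprod_Suc_left)
  qed
qed

lemma cprod_split_aligned:
  assumes "1 \<le> k" "k \<le> n"
  shows "aligned kind absv (\<epsilon> / 2) (d 0) (d k) (d (Suc n)) (cprod g d 0 (k - 1)) (cprod g d k (n - k))"
proof -
  obtain j where k: "k = Suc j" using assms(1) by (cases k) simp_all
  have prefix: "aligned kind absv (3 * \<epsilon> / 4) (d 0) (d k) (d (Suc k)) (cprod g d 0 (k - 1)) (g k)"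
    using cprod_prefix_aligned[of j] assms k by simp
  show ?thesis
  proof (cases "k = n")
    case True
    have "aligned kind absv (\<epsilon> / 2) (d 0) (d k) (d (Suc k)) (cprod g d 0 (k - 1)) (g k)"
      using prefix by (rule aligned_mono) (use pos in simp)
    then show ?thesis using True by simp
  next
    case False
    have num: "\<epsilon> / 2 \<le> (1 - 2 * (\<epsilon>\<^sup>2 / 12) / (3 * \<epsilon> / 4 * (3 * \<epsilon> / 4))) * (3 * \<epsilon> / 4)"
      using pos by (simp add: field_simps power2_eq_square)
    have "aligned kind absv (\<epsilon> / 2) (d 0) (d k) (d (Suc n))
        (cprod g d 0 (k - 1)) (mmult (d (Suc k)) (g k) (cprod g d (Suc k) (n - Suc k)))"
      using False assms pos
      by (intro aligned_mmult_left[OF nonzero sigma _ prefix _ cprod_suffix_aligned _ num]) simp_all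
    moreover have "n - k = Suc (n - Suc k)" using False assms by simp
    ultimately show ?thesis by (simp only: cprod_Suc_left)
  qed
qed

end

lemma lemma2p15_claim_holds: "lemma2p15_claim kind absv"
  unfolding lemma2p15_claim_def
proof (intro allI impI, elim conjE)
  fix \<epsilon> n d k and g :: "nat \<Rightarrow> nat \<Rightarrow> nat \<Rightarrow> 'a"
  assume pos: "0 < \<epsilon>" and "\<epsilon> \<le> 1" and nonzero: "\<forall>k\<le>n. nonzero_mat (d k) (d (Suc k)) (g k)"
    and sigma: "\<forall>k. 1 \<le> k \<and> k \<le> n - 1 \<longrightarrow> sigma kind absv (d k) (d (Suc k)) (g k) \<le> \<epsilon>\<^sup>2 / 12"
    and aligned: "\<forall>k<n. aligned kind absv \<epsilon> (d k) (d (Suc k)) (d (Suc (Suc k))) (g k) (g (Suc k))"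
    and k: "1 \<le> k" "k \<le> n"
  have "\<And>k. k \<le> n \<Longrightarrow> 0 < mn (d k) (d (Suc k)) (g k)"
    using nonzero by (simp add: nonzero_mat_mnorm_pos)
  moreover have "\<And>k. 1 \<le> k \<Longrightarrow> k < n \<Longrightarrow> sigma kind absv (d k) (d (Suc k)) (g k) \<le> \<epsilon>\<^sup>2 / 12"
    using sigma by simp
  moreover have "\<And>k. k < n \<Longrightarrow> aligned kind absv \<epsilon> (d k) (d (Suc k)) (d (Suc (Suc k))) (g k) (g (Suc k))"
    using aligned by simp
  ultimately show "aligned kind absv (\<epsilon> / 2) (d 0) (d k) (d (Suc n)) (cprod g d 0 (k - 1)) (cprod g d k (n - k))"
    by (rule cprod_split_aligned[OF pos _ _ _ k])
qed

end

lemma abs_value_norm: "abs_value Herm (norm :: 'a::real_normed_field \<Rightarrow> real)"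
proof
  fix r :: real
  assume "0 < r"
  then have "norm (of_real r :: 'a) = r" by simp
  then show "\<exists>c::'a. norm c = r" by blast
qed (simp_all add: norm_mult norm_triangle_ineq)

lemma abs_value_na_local_field:
  assumes "na_local_field v"
  shows "abs_value MaxN v"
proof -
  have nonneg: "\<And>x. 0 \<le> v x" and zero: "\<And>x. v x = 0 \<longleftrightarrow> x = 0"
    and mult: "\<And>x y. v (x * y) = v x * v y" and ultra: "\<And>x y. v (x + y) \<le> max (v x) (v y)"
    using assms unfolding na_local_field_def by blast+
  have "v 1 = 1" using mult[of 1 1] zero[of 1] by simp
  show ?thesis
  proof
    show "v (x + y) \<le> v x + v y" for x y
      using ultra[of x y] nonneg[of x] nonneg[of y] by linarith
    show "\<exists>c. v c * v x = 1" if "x \<noteq> 0" for x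
      using mult[of "inverse x" x] \<open>v 1 = 1\<close> that by (metis field_class.field_inverse)
  qed (simp_all add: nonneg zero mult)
qed

theorem lemma2p15:
  shows "lemma2p15_claim Herm (norm :: 'a::real_normed_field \<Rightarrow> real) \<and>
         (\<forall>v :: 'b::field \<Rightarrow> real. na_local_field v \<longrightarrow> lemma2p15_claim MaxN v)"
  using abs_value.lemma2p15_claim_holds[OF abs_value_norm] abs_value.lemma2p15_claim_holds[OF abs_value_na_local_field]
  by blast

end
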